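(* Let $q=p^e$ with $p$ prime and $e\ge 1$, and fix an integer $s$ with $0\le s<e$. Let $C_1$ and $C_2$ be linear codes over $\mathbb{F}_q$ with parameters $[n,k_1,d_1]_q$ and $[n,k_2,d_2]_q$ respectively, such that $C_2^{\perp_s}\subseteq C_1$. Then there exists a quantum code with parameters $[[n,k_1+k_2-n,d]]_q$, where $$d=\min\{w_H(c)\mid c\in (C_1\setminus (C_2^{p^{e-s}})^{\perp})\cup (C_2^{p^{e-s}}\setminus C_1^{\perp})\}\ \ge\ \min\{d_1,d_2\},$$ and this code is pure to $\min\{d_1,d_2\}$.
   Context: For $\mathbf{x},\mathbf{y}\in\mathbb{F}_q^n$ the $s$-Galois form is $[\mathbf{x},\mathbf{y}]_s=\sum_{i=1}^n x_iy_i^{p^s}$. For a code $C\subseteq\mathbb{F}_q^n$, its $s$-Galois dual is $C^{\perp_s}=\{\mathbf{x}\in\mathbb{F}_q^n: [\mathbf{c},\mathbf{x}]_s=0\ \forall \mathbf{c}\in C\}$; $C^{\perp}=C^{\perp_0}$ is the Euclidean dual. For a vector $\mathbf{a}=(a_1,\dots,a_n)$, $\mathbf{a}^{p^{e-s}}=(a_1^{p^{e-s}},\dots,a_n^{p^{e-s}})$, and $C^{p^{e-s}}=\{\mathbf{a}^{p^{e-s}}:\mathbf{a}\in C\}$. $w_H$ denotes Hamming weight. Quantum codes: let $V_n=(\mathbb{C}^q)^{\otimes n}$ with orthonormal basis $\{|\mathbf{c}\rangle:\mathbf{c}\in\mathbb{F}_q^n\}$. For $a,b\in\mathbb{F}_q$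 define $X(a)|x\rangle=|x+a\rangle$, $Z(b)|x\rangle=\omega^{\mathrm{tr}(bx)}|x\rangle$ with $\omega=e^{2\pi i/p}$ and $\mathrm{tr}:\mathbb{F}_q\to\mathbb{F}_p$ the trace; for $\mathbf{a},\mathbf{b}\in\mathbb{F}_q^n$ let $X(\mathbf{a})=\bigotimes_i X(a_i)$, $Z(\mathbf{b})=\bigotimes_i Z(b_i)$. The error group is $G_n=\{\omega^cX(\mathbf{a})Z(\mathbf{b}):\mathbf{a},\mathbf{b}\in\mathbb{F}_q^n, c\in\mathbb{F}_p\}$, and the weight of $\omega^cX(\mathbf{a})Z(\mathbf{b})$ is the number of $i$ with $(a_i,b_i)\ne(0,0)$. A quantum code with parameters $[[n,k,d]]_q$ is a subspace $Q\subseteq V_n$ of dimension $q^k$ with minimum distance $d$, i.e. for all $|u\rangle,|v\rangle\in Q$ with $\langle u|v\rangle=0$ and every $E\in G_n$ of weight at most $d-1$, $\langle u|E|v\rangle=0$ (and, if $k=0$, as is standard, $d$ is defined via purity: $\langle u|E|u\rangle=\langle u|u\rangle\cdot$const fails only for weight $\ge d$). $Q$ is pure to $t$ if $\langle u|E|v\rangle=0$ for all $|u\rangle,|v\rangle\in Q$ and all $E\in G_n$ of weight between $1$ and $t-1$. *)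

theory Defs
  imports Complex_Main "HOL-Computational_Algebra.Primes"
begin

definition lcomb :: "('x \<Rightarrow> 'k::field) set \<Rightarrow> (('x \<Rightarrow> 'k) \<Rightarrow> 'k) \<Rightarrow> ('x \<Rightarrow> 'k)" where
  "lcomb B c = (\<lambda>x. \<Sum>b\<in>B. c b * b x)"

definition has_dim :: "('x \<Rightarrow> 'k::field) set \<Rightarrow> nat \<Rightarrow> bool" where
  "has_dim V m \<longleftrightarrow> (\<exists>B. finite B \<and> card B = m \<and> B \<subseteq> V \<and>
      (\<forall>c. lcomb B c = (\<lambda>_. 0) \<longrightarrow> (\<forall>b\<in>B. c b = 0)) \<and>
      V = {lcomb B c | c. True})"

definition hamming_wt :: "('n::finite \<Rightarrow> 'a::zero) \<Rightarrow> nat" where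
  "hamming_wt x = card {i. x i \<noteq> 0}"

text \<open>Linear [n,k,d] code (n = CARD('n)): k-dimensional subspace whose
minimum distance (minimum weight of a nonzero codeword) is d.\<close>
definition lin_code :: "('n::finite \<Rightarrow> 'a::field) set \<Rightarrow> nat \<Rightarrow> nat \<Rightarrow> bool" where
  "lin_code C k d \<longleftrightarrow> has_dim C k \<and>
     (\<exists>c\<in>C. c \<noteq> (\<lambda>_. 0) \<and> hamming_wt c = d) \<and> (\<forall>c\<in>C. c \<noteq> (\<lambda>_. 0) \<longrightarrow> d \<le> hamming_wt c)"

definition galois_form :: "nat \<Rightarrow> nat \<Rightarrow> ('n::finite \<Rightarrow> 'a::field) \<Rightarrow> ('n \<Rightarrow> 'a) \<Rightarrow> 'a" where
  "galois_form p s x y = (\<Sum>i\<in>UNIV. x i * y i ^ (p ^ s))"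

definition galois_dual :: "nat \<Rightarrow> nat \<Rightarrow> ('n::finite \<Rightarrow> 'a::field) set \<Rightarrow> ('n \<Rightarrow> 'a) set" where
  "galois_dual p s C = {x. \<forall>c\<in>C. galois_form p s c x = 0}"

definition euclid_dual :: "('n::finite \<Rightarrow> 'a::field) set \<Rightarrow> ('n \<Rightarrow> 'a) set" where
  "euclid_dual C = {x. \<forall>c\<in>C. (\<Sum>i\<in>UNIV. c i * x i) = 0}"

definition code_pow :: "('n \<Rightarrow> 'a::field) set \<Rightarrow> nat \<Rightarrow> ('n \<Rightarrow> 'a) set" where
  "code_pow C m = (\<lambda>c. \<lambda>i. c i ^ m) ` C"

definition trace :: "nat \<Rightarrow> nat \<Rightarrow> 'a::field \<Rightarrow> 'a" where
  "trace p e x = (\<Sum>i<e. x ^ (p ^ i))"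

text \<open>omega^(tr z) with omega = exp(2 pi i / p); tr z lies in the prime field,
identified with {0..<p}.\<close>
definition chi :: "nat \<Rightarrow> nat \<Rightarrow> 'a::field \<Rightarrow> complex" where
  "chi p e z = exp (2 * of_real pi * \<i> *
      of_nat (THE k. k < p \<and> of_nat k = trace p e z) / of_nat p)"

text \<open>States of V_n = (C^q)^{tensor n}: functions on the basis F_q^n.\<close>
definition qinner :: "(('n::finite \<Rightarrow> 'a::{field,finite}) \<Rightarrow> complex) \<Rightarrow> (('n \<Rightarrow> 'a) \<Rightarrow> complex) \<Rightarrow> complex" where
  "qinner u v = (\<Sum>x\<in>UNIV. cnj (u x) * v x)"

text \<open>The error omega^c X(a) Z(b) applied to a state v:
  X(a) Z(b) |x> = omega^(tr(b.x)) |x + a>.\<close>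
definition err_apply :: "nat \<Rightarrow> nat \<Rightarrow> nat \<Rightarrow> ('n::finite \<Rightarrow> 'a::{field,finite}) \<Rightarrow> ('n \<Rightarrow> 'a)
     \<Rightarrow> (('n \<Rightarrow> 'a) \<Rightarrow> complex) \<Rightarrow> (('n \<Rightarrow> 'a) \<Rightarrow> complex)" where
  "err_apply p e c a b v = (\<lambda>y. exp (2 * of_real pi * \<i> * of_nat c / of_nat p) *
       (\<Prod>i\<in>UNIV. chi p e (b i * (y i - a i))) * v (\<lambda>i. y i - a i))"

definition err_wt :: "('n::finite \<Rightarrow> 'a::zero) \<Rightarrow> ('n \<Rightarrow> 'a) \<Rightarrow> nat" where
  "err_wt a b = card {i. a i \<noteq> 0 \<or> b i \<noteq> 0}"

text \<open>Q has minimum distance d: every error of weight at most d-1 satisfies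
<u|E|v> = 0 for orthogonal u,v in Q; for k = 0 (dim Q = 1) purity is used.\<close>
definition qmin_dist :: "nat \<Rightarrow> nat \<Rightarrow> (('n::finite \<Rightarrow> 'a::{field,finite}) \<Rightarrow> complex) set \<Rightarrow> nat \<Rightarrow> bool" where
  "qmin_dist p e Q d \<longleftrightarrow>
     (\<forall>u\<in>Q. \<forall>v\<in>Q. qinner u v = 0 \<longrightarrow>
        (\<forall>c a b. c < p \<longrightarrow> err_wt a b < d \<longrightarrow> qinner u (err_apply p e c a b v) = 0)) \<and>
     (has_dim Q 1 \<longrightarrow> (\<forall>u\<in>Q. \<forall>c a b. c < p \<longrightarrow> 1 \<le> err_wt a b \<longrightarrow> err_wt a b < d \<longrightarrow>
        qinner u (err_apply p e c a b u) = 0))"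

definition pure_to :: "nat \<Rightarrow> nat \<Rightarrow> (('n::finite \<Rightarrow> 'a::{field,finite}) \<Rightarrow> complex) set \<Rightarrow> nat \<Rightarrow> bool" where
  "pure_to p e Q t \<longleftrightarrow> (\<forall>u\<in>Q. \<forall>v\<in>Q. \<forall>c a b. c < p \<longrightarrow> 1 \<le> err_wt a b \<longrightarrow> err_wt a b < t \<longrightarrow>
        qinner u (err_apply p e c a b v) = 0)"

text \<open>Quantum code [[n,k,d]]_q in V_n, n = CARD('n), q = CARD('a).\<close>
definition quantum_code :: "nat \<Rightarrow> nat \<Rightarrow> (('n::finite \<Rightarrow> 'a::{field,finite}) \<Rightarrow> complex) set \<Rightarrow> nat \<Rightarrow> nat \<Rightarrow> bool" where
  "quantum_code p e Q k d \<longleftrightarrow> has_dim Q (card (UNIV :: 'a set) ^ k) \<and> qmin_dist p e Q d"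

end

theory Submission
  imports Defs "HOL-Algebra.Multiplicative_Group" "HOL-Number_Theory.Residues"
    "HOL-Computational_Algebra.Polynomial" "HOL-Library.Cardinality"
    "HOL-Library.Indicator_Function"
begin

text \<open>Let \<open>D = C\<^sub>2\<^bsup>p\<^sup>e\<^sup>-\<^sup>s\<^esup>\<close>. Raising the \<open>s\<close>-Galois form to the power \<open>p\<^sup>e\<^sup>-\<^sup>s\<close> shows that
  the \<open>s\<close>-Galois dual of \<open>C\<^sub>2\<close> is the Euclidean dual \<open>D\<^sup>\<perp>\<close>, and the twist preserves
  cardinalities and weights; so \<open>D\<^sup>\<perp> \<subseteq> C\<^sub>1\<close>. The quantum code is spanned by the coset states
  \<open>\<Sum>\<^sub>s |x + s\<rangle>\<close> (\<open>s\<close> ranging over \<open>D\<^sup>\<perp>\<close>) for \<open>x \<in> C\<^sub>1\<close>; by the character-sum identity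
  \<open>|W| |W\<^sup>\<perp>| = q\<^sup>n\<close> it has dimension \<open>|C\<^sub>1| / |D\<^sup>\<perp>| = q\<^sup>k\<^sup>1\<^sup>+\<^sup>k\<^sup>2\<^sup>-\<^sup>n\<close>.
  An error \<open>X(a) Z(b)\<close> annihilates the code unless \<open>a \<in> C\<^sub>1\<close> and \<open>b \<in> D\<^sup>\<perp>\<^sup>\<perp> = D\<close>, because
  otherwise a translation preserving the code multiplies the matrix element by a character
  value \<open>\<noteq> 1\<close>; and it acts as a scalar if moreover \<open>a \<in> D\<^sup>\<perp>\<close> and \<open>b \<in> C\<^sub>1\<^sup>\<perp>\<close>. Every other
  error has \<open>a\<close> or \<open>b\<close> in the set whose minimum weight is \<open>d\<close>. Purity to \<open>min d\<^sub>1 d\<^sub>2\<close> holds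
  because all nonzero words of \<open>C\<^sub>1\<close> and \<open>D\<close> have at least that weight.\<close>

text \<open>Lagrange's theorem in the multiplicative group.\<close>
lemma finite_field_power_card:
  fixes x :: "'a::{field,finite}"
  shows "x ^ CARD('a) = x"
proof (cases "x = 0")
  case False
  define G :: "'a monoid" where "G = \<lparr>carrier = UNIV - {0}, monoid.mult = (*), one = 1\<rparr>"
  interpret G: group G
  proof (rule groupI)
    fix y assume "y \<in> carrier G"
    then show "\<exists>z\<in>carrier G. z \<otimes>\<^bsub>G\<^esub> y = \<one>\<^bsub>G\<^esub>"
      by (auto simp: G_def intro!: bexI[of _ "inverse y"])
  qed (auto simp: G_def)
  have pow: "y [^]\<^bsub>G\<^esub> n = y ^ n" for y :: 'a and n
    by (induction n) (simp_all add: G_def)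
  have order: "Coset.order G = CARD('a) - 1"
    by (simp add: Coset.order_def G_def card_Diff_singleton)
  have "x \<in> carrier G"
    using False by (simp add: G_def)
  from G.pow_order_eq_1[OF this] have "x ^ (CARD('a) - 1) = 1"
    unfolding pow order by (simp add: G_def)
  moreover have "CARD('a) = Suc (CARD('a) - 1)"
    using finite_UNIV_card_ge_0[where 'a='a] by simp
  ultimately show ?thesis
    by (metis mult.right_neutral power_Suc)
qed (simp add: finite_UNIV_card_ge_0)

lemma card_field_gt_1: "1 < CARD('a::{field,finite})"
proof -
  have "card {0 :: 'a, 1} \<le> CARD('a)"
    by (rule card_mono) simp_all
  then show ?thesis
    by simp
qed

lemma exp_root_of_unity_mod:
  assumes "0 < (p::nat)"
  shows "exp (2 * of_real pi * \<i> * of_nat (k mod p) / of_nat p) =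
         exp (2 * of_real pi * \<i> * of_nat k / of_nat p)"
proof -
  have "complex_of_nat k = of_nat (k mod p) + of_nat p * of_nat (k div p)"
    by (metis mod_mult_div_eq of_nat_add of_nat_mult)
  then have "2 * of_real pi * \<i> * of_nat k / of_nat p =
        2 * of_real pi * \<i> * of_nat (k mod p) / of_nat p + of_nat (k div p) * (2 * of_real pi * \<i>)"
    using assms by (simp add: field_simps)
  then show ?thesis
    by (simp add: exp_add exp_of_nat_mult)
qed

lemma exp_root_of_unity_neq_1:
  assumes "0 < k" "k < (p::nat)"
  shows "exp (2 * of_real pi * \<i> * of_nat k / of_nat p) \<noteq> 1"
proof
  assume "exp (2 * of_real pi * \<i> * of_nat k / of_nat p) = 1"
  then have "cis (2 * pi * k / p) = 1"
    by (simp add: cis_conv_exp mult_ac)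
  then have "cos (2 * pi * k / p) = 1"
    by (metis cis.sel(1) one_complex.sel(1))
  then obtain n :: int where "2 * pi * k / p = n * 2 * pi"
    using cos_one_2pi_int by auto
  then have "real k = real_of_int n * p"
    using assms by (simp add: field_simps)
  then have "int k = n * int p"
    by (metis of_int_eq_iff of_int_mult of_int_of_nat_eq)
  then have "p dvd k"
    by (metis dvd_triv_right int_dvd_int_iff)
  then show False
    using assms by (meson nat_dvd_not_less)
qed

context
  fixes p e :: nat
  assumes prime_p: "prime p" and card_field: "CARD('a::{field,finite}) = p ^ e"
begin

lemma CHAR_eq_p: "CHAR('a) = p"
proof -
  have "CHAR('a) > 0"
    by (rule finite_imp_CHAR_pos) simp
  then have "prime CHAR('a)"
    using prime_CHAR_semidom by blast
  moreover have "CHAR('a) dvd p ^ e"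
    using CHAR_dvd_CARD[where 'a='a] card_field by simp
  ultimately show ?thesis
    using prime_p prime_dvd_power primes_dvd_imp_eq by blast
qed

lemma frobenius_add: "(x + y :: 'a) ^ p ^ j = x ^ p ^ j + y ^ p ^ j"
  by (rule freshmans_dream') (simp_all add: CHAR_eq_p prime_p)

lemma frobenius_sum: "(sum f A :: 'a) ^ p ^ j = (\<Sum>i\<in>A. f i ^ p ^ j)"
  by (rule freshmans_dream_sum') (simp_all add: CHAR_eq_p prime_p)

lemma power_p_e_eq: "(x :: 'a) ^ p ^ e = x"
  using finite_field_power_card[of x] card_field by simp

lemma e_pos: "0 < e"
  using card_field_gt_1[where 'a='a] card_field by (cases e) simp_all

lemma trace_add: "trace p e (x + y :: 'a) = trace p e x + trace p e y"
  unfolding trace_def by (simp add: frobenius_add sum.distrib)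

lemma trace_power_p: "trace p e (z :: 'a) ^ p = trace p e z"
proof -
  obtain m where m: "e = Suc m"
    using e_pos by (cases e) auto
  have "trace p e z ^ p ^ 1 = (\<Sum>i<e. z ^ p ^ Suc i)"
    unfolding trace_def frobenius_sum by (simp flip: power_mult add: mult.commute)
  also have "\<dots> = (\<Sum>i<m. z ^ p ^ Suc i) + z ^ p ^ e"
    by (simp only: m sum.lessThan_Suc)
  also have "\<dots> = trace p e z"
    by (simp only: power_p_e_eq) (unfold trace_def m sum.lessThan_Suc_shift, simp add: add.commute)
  finally show ?thesis
    by simp
qed

lemma of_nat_eq_of_nat_less_p: "j < p \<Longrightarrow> k < p \<Longrightarrow> (of_nat j :: 'a) = of_nat k \<Longrightarrow> j = k"
  by (metis CHAR_eq_p cong_less_modulus_unique_nat of_nat_eq_iff_cong_CHAR)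

text \<open>The roots of \<open>y\<^sup>p = y\<close> are at most \<open>p\<close> in number and include the \<open>p\<close> elements of
  the prime field, so they are exactly the prime field.\<close>
lemma roots_power_p_eq_prime_field: "{y :: 'a. y ^ p = y} = of_nat ` {..<p}"
proof -
  have p1: "1 < p"
    using prime_gt_1_nat[OF prime_p] .
  have frobenius: "(x + y :: 'a) ^ p = x ^ p + y ^ p" for x y
    using frobenius_add[of x y 1] by simp
  have "(of_nat k :: 'a) ^ p = of_nat k" for k
    by (induction k) (simp_all add: frobenius prime_gt_0_nat[OF prime_p])
  then have sub: "of_nat ` {..<p} \<subseteq> {y :: 'a. y ^ p = y}"
    by auto
  define P :: "'a poly" where "P = monom 1 p - [:0, 1:]"
  have "coeff [:0, 1 :: 'a:] p = 0"
    by (rule coeff_eq_0) (use p1 in simp)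
  then have "coeff P p = 1"
    by (simp add: P_def)
  then have "P \<noteq> 0"
    by auto
  have "degree P \<le> p"
    unfolding P_def by (rule order.trans[OF degree_diff_le_max]) (use p1 in \<open>auto simp: degree_monom_eq\<close>)
  moreover have "{y :: 'a. y ^ p = y} = {y. poly P y = 0}"
    by (auto simp: P_def poly_monom)
  ultimately have "card {y :: 'a. y ^ p = y} \<le> p"
    using card_poly_roots_bound[OF \<open>P \<noteq> 0\<close>] by simp
  moreover have "card (of_nat ` {..<p} :: 'a set) = p"
    by (subst card_image) (auto intro!: inj_onI of_nat_eq_of_nat_less_p)
  ultimately show ?thesis
    using sub by (metis card_seteq finite)
qed

lemma trace_in_prime_field: "\<exists>!k. k < p \<and> of_nat k = trace p e (z :: 'a)"
proof -
  have "trace p e z \<in> of_nat ` {..<p}"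
    using trace_power_p roots_power_p_eq_prime_field by blast
  then obtain k where "k < p" "of_nat k = trace p e z"
    by auto
  then show ?thesis
    using of_nat_eq_of_nat_less_p by metis
qed

text \<open>The trace is a polynomial of degree \<open>p\<^sup>e\<^sup>-\<^sup>1\<close>, so it cannot vanish on all \<open>p\<^sup>e\<close> elements.\<close>
lemma trace_not_identically_zero: "\<exists>z :: 'a. trace p e z \<noteq> 0"
proof (rule ccontr)
  assume "\<not> ?thesis"
  then have zero: "\<And>z :: 'a. trace p e z = 0"
    by simp
  obtain m where m: "e = Suc m"
    using e_pos by (cases e) auto
  have p1: "1 < p"
    using prime_gt_1_nat[OF prime_p] .
  define P :: "'a poly" where "P = (\<Sum>i<e. monom 1 (p ^ i))"
  have "coeff P (p ^ m) = (\<Sum>i<e. if i = m then 1 else 0)"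
    using p1 by (simp add: P_def coeff_sum)
  then have "P \<noteq> 0"
    using m by auto
  have "degree P \<le> p ^ m"
    unfolding P_def
    by (rule degree_sum_le) (use p1 in \<open>auto simp: degree_monom_eq m intro: power_increasing\<close>)
  moreover have "card {z :: 'a. poly P z = 0} \<le> degree P"
    by (rule card_poly_roots_bound[OF \<open>P \<noteq> 0\<close>])
  moreover have "{z :: 'a. poly P z = 0} = UNIV"
    using zero by (simp add: P_def trace_def poly_sum poly_monom)
  ultimately have "p ^ e \<le> p ^ m"
    using card_field by simp
  then show False
    using p1 m by simp
qed

lemma chi_eq:
  assumes "k < p" "of_nat k = trace p e (z :: 'a)"
  shows "chi p e z = exp (2 * of_real pi * \<i> * of_nat k / of_nat p)"
proof -
  have "(THE k. k < p \<and> of_nat k = trace p e z) = k"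
    using assms of_nat_eq_of_nat_less_p by (intro the_equality) auto
  then show ?thesis
    unfolding chi_def by simp
qed

lemma chi_add: "chi p e (z + w :: 'a) = chi p e z * chi p e w"
proof -
  obtain k l where k: "k < p" "of_nat k = trace p e z" and l: "l < p" "of_nat l = trace p e w"
    using trace_in_prime_field by metis
  have "[(k + l) mod p = k + l] (mod CHAR('a))"
    by (simp add: CHAR_eq_p cong_def)
  then have "(of_nat ((k + l) mod p) :: 'a) = of_nat (k + l)"
    by (simp only: of_nat_eq_iff_cong_CHAR)
  then have "of_nat ((k + l) mod p) = trace p e (z + w)"
    by (simp add: k l trace_add)
  then have "chi p e (z + w) = exp (2 * of_real pi * \<i> * of_nat ((k + l) mod p) / of_nat p)"
    using prime_gt_0_nat[OF prime_p] by (intro chi_eq) simp_all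
  also have "\<dots> = exp (2 * of_real pi * \<i> * of_nat (k + l) / of_nat p)"
    using prime_gt_0_nat[OF prime_p] by (rule exp_root_of_unity_mod)
  also have "\<dots> = chi p e z * chi p e w"
    by (simp add: chi_eq[OF k] chi_eq[OF l] add_divide_distrib distrib_left flip: exp_add)
  finally show ?thesis .
qed

lemma chi_0: "chi p e (0 :: 'a) = 1"
proof -
  have "trace p e (0 :: 'a) = 0"
    using prime_gt_0_nat[OF prime_p] by (simp add: trace_def power_0_left)
  then show ?thesis
    using chi_eq[of 0 0] prime_gt_0_nat[OF prime_p] by simp
qed

lemma chi_neq_1:
  assumes "trace p e (z :: 'a) \<noteq> 0"
  shows "chi p e z \<noteq> 1"
proof -
  obtain k where k: "k < p" "of_nat k = trace p e z"
    using trace_in_prime_field by metis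
  with assms have "0 < k"
    by (metis gr0I of_nat_0)
  then show ?thesis
    using chi_eq[OF k] exp_root_of_unity_neq_1 k(1) by simp
qed

lemma chi_sum: "chi p e (\<Sum>i\<in>A. f i :: 'a) = (\<Prod>i\<in>A. chi p e (f i))"
  by (induction A rule: infinite_finite_induct) (simp_all add: chi_0 chi_add)

end

definition dot :: "('n::finite \<Rightarrow> 'a::comm_semiring_0) \<Rightarrow> ('n \<Rightarrow> 'a) \<Rightarrow> 'a" where
  "dot x y = (\<Sum>i\<in>UNIV. x i * y i)"

definition lin_subspace :: "('n \<Rightarrow> 'a::field) set \<Rightarrow> bool" where
  "lin_subspace W \<longleftrightarrow> (\<lambda>_. 0) \<in> W \<and> (\<forall>x\<in>W. \<forall>y\<in>W. (\<lambda>i. x i + y i) \<in> W) \<and>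
     (\<forall>c. \<forall>x\<in>W. (\<lambda>i. c * x i) \<in> W)"

lemma dot_commute: "dot x y = dot y x"
  unfolding dot_def by (simp add: mult.commute)

lemma dot_add_left: "dot (\<lambda>i. x i + y i) z = dot x z + dot y z"
  unfolding dot_def by (simp add: distrib_right sum.distrib)

lemma dot_scale_left: "dot (\<lambda>i. c * x i) z = c * dot x z"
  unfolding dot_def by (simp add: sum_distrib_left mult.assoc)

lemma dot_add_right: "dot z (\<lambda>i. x i + y i) = dot z x + dot z y"
  unfolding dot_def by (simp add: distrib_left sum.distrib)

lemma dot_scale_right: "dot z (\<lambda>i. c * x i) = c * dot z x"
  unfolding dot_def by (simp add: sum_distrib_left mult_ac)

lemma dot_zero_right: "dot z (\<lambda>_. 0) = 0"
  unfolding dot_def by simp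

lemma euclid_dual_eq: "euclid_dual C = {x. \<forall>c\<in>C. dot c x = 0}"
  unfolding euclid_dual_def dot_def ..

lemma lin_subspace_zero: "lin_subspace W \<Longrightarrow> (\<lambda>_. 0) \<in> W"
  unfolding lin_subspace_def by blast

lemma lin_subspace_add: "lin_subspace W \<Longrightarrow> x \<in> W \<Longrightarrow> y \<in> W \<Longrightarrow> (\<lambda>i. x i + y i) \<in> W"
  unfolding lin_subspace_def by blast

lemma lin_subspace_scale: "lin_subspace W \<Longrightarrow> x \<in> W \<Longrightarrow> (\<lambda>i. c * x i) \<in> W"
  unfolding lin_subspace_def by blast

lemma lin_subspace_diff:
  assumes "lin_subspace W" "x \<in> W" "y \<in> W"
  shows "(\<lambda>i. x i - y i) \<in> W"
  using lin_subspace_add[OF assms(1,2) lin_subspace_scale[OF assms(1,3), of "-1"]] by simp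

lemma lin_subspace_UNIV: "lin_subspace UNIV"
  unfolding lin_subspace_def by simp

lemma lin_subspace_euclid_dual: "lin_subspace (euclid_dual C)"
  unfolding lin_subspace_def euclid_dual_eq by (simp add: dot_add_right dot_scale_right dot_zero_right)

lemma euclid_dual_UNIV: "euclid_dual (UNIV :: ('n::finite \<Rightarrow> 'a::field) set) = {\<lambda>_. 0}"
proof -
  have "dot (\<lambda>i. if i = j then 1 else 0) w = w j" for w :: "'n \<Rightarrow> 'a" and j
    unfolding dot_def by (simp add: if_distrib[of "\<lambda>u. u * _"] cong: if_cong)
  then show ?thesis
    unfolding euclid_dual_eq by (auto simp: dot_zero_right) metis
qed

lemma subset_euclid_dual_euclid_dual: "W \<subseteq> euclid_dual (euclid_dual W)"
  unfolding euclid_dual_eq by (auto simp: dot_commute)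

lemma has_dim_lin_subspace:
  assumes "has_dim C k"
  shows "lin_subspace C"
proof -
  obtain B where C: "C = {lcomb B c | c. True}"
    using assms unfolding has_dim_def by auto
  have "(\<lambda>_. 0) = lcomb B (\<lambda>_. 0)"
    "(\<lambda>i. lcomb B c i + lcomb B c' i) = lcomb B (\<lambda>b. c b + c' b)"
    "(\<lambda>i. a * lcomb B c i) = lcomb B (\<lambda>b. a * c b)" for a c c'
    unfolding lcomb_def by (simp_all add: distrib_right sum.distrib sum_distrib_left mult.assoc)
  then show ?thesis
    unfolding lin_subspace_def C by blast
qed

text \<open>A basis \<open>B\<close> of \<open>C\<close> identifies \<open>C\<close> with the coefficient vectors \<open>B \<rightarrow>\<^sub>E UNIV\<close>.\<close>
lemma card_has_dim:
  assumes "has_dim (C :: ('n::finite \<Rightarrow> 'a::{field,finite}) set) k"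
  shows "card C = CARD('a) ^ k"
proof -
  obtain B where B: "finite B" "card B = k"
     "\<forall>c. lcomb B c = (\<lambda>_. 0) \<longrightarrow> (\<forall>b\<in>B. c b = 0)" "C = {lcomb B c | c. True}"
    using assms unfolding has_dim_def by blast
  have "lcomb B c = lcomb B (restrict c B)" for c
    unfolding lcomb_def by (intro ext sum.cong) auto
  then have image: "C = lcomb B ` (B \<rightarrow>\<^sub>E UNIV)"
    using B(4) by fastforce
  have "inj_on (lcomb B) (B \<rightarrow>\<^sub>E UNIV)"
  proof (rule inj_onI)
    fix c c' assume c: "c \<in> B \<rightarrow>\<^sub>E UNIV" "c' \<in> B \<rightarrow>\<^sub>E UNIV" "lcomb B c = lcomb B c'"
    have "lcomb B (\<lambda>b. c b - c' b) = (\<lambda>_. 0)"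
      using c(3) unfolding lcomb_def by (simp add: left_diff_distrib sum_subtractf fun_eq_iff)
    then have "\<forall>b\<in>B. c b = c' b"
      using B(3) by fastforce
    then show "c = c'"
      using c(1,2) by (auto intro!: extensionalityI[of _ B] simp: PiE_iff)
  qed
  then have "card C = card (B \<rightarrow>\<^sub>E (UNIV :: 'a set))"
    by (simp add: image card_image)
  also have "\<dots> = CARD('a) ^ k"
    using B(1,2) by (simp add: card_PiE)
  finally show ?thesis .
qed

lemma exists_dot_eq:
  assumes "lin_subspace W" "w0 \<in> W" "dot w0 x \<noteq> 0"
  shows "\<exists>w\<in>W. dot w x = z"
proof
  show "(\<lambda>i. z / dot w0 x * w0 i) \<in> W"
    using assms(1,2) by (rule lin_subspace_scale)
  show "dot (\<lambda>i. z / dot w0 x * w0 i) x = z"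
    using assms(3) by (simp only: dot_scale_left) simp
qed

lemma has_dim_1_vanishing:
  assumes "has_dim V 1" "f \<in> V" "g \<in> V" "f x \<noteq> 0" "g x = (0::'k::field)"
  shows "g = (\<lambda>_. 0)"
proof -
  obtain B where "card B = 1" "V = {lcomb B c | c. True}"
    using assms(1) unfolding has_dim_def by auto
  then obtain b where "B = {b}" "V = {lcomb {b} c | c. True}"
    by (meson card_1_singletonE)
  then obtain cf cg where f: "f = (\<lambda>z. cf b * b z)" and g: "g = (\<lambda>z. cg b * b z)"
    using assms(2,3) unfolding lcomb_def by auto
  show ?thesis
    using assms(4,5) unfolding f g by simp
qed

context
  fixes p e :: nat
  assumes prime_p: "prime p" and card_field: "CARD('a::{field,finite}) = p ^ e"
begin

lemma sum_eq_0_by_translation: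
  fixes f :: "('n::finite \<Rightarrow> 'a) \<Rightarrow> complex" and z :: 'a
  assumes W: "lin_subspace W" "t \<in> W" and "trace p e z \<noteq> 0"
    and translate: "\<And>x. x \<in> W \<Longrightarrow> f (\<lambda>i. x i + t i) = chi p e z * f x"
  shows "(\<Sum>x\<in>W. f x) = 0"
proof -
  have "(\<Sum>x\<in>W. f x) = (\<Sum>x\<in>W. f (\<lambda>i. x i + t i))"
    by (rule sum.reindex_bij_witness[of _ "\<lambda>x i. x i + t i" "\<lambda>x i. x i - t i"])
      (auto intro: lin_subspace_add lin_subspace_diff W)
  also have "\<dots> = chi p e z * (\<Sum>x\<in>W. f x)"
    by (simp add: translate sum_distrib_left)
  finally have "(1 - chi p e z) * (\<Sum>x\<in>W. f x) = 0"
    by (simp add: algebra_simps)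
  then show ?thesis
    using chi_neq_1[OF prime_p card_field \<open>trace p e z \<noteq> 0\<close>] by simp
qed

lemma sum_chi_dot_eq_0:
  fixes W :: "('n::finite \<Rightarrow> 'a) set"
  assumes W: "lin_subspace W" and "w0 \<in> W" "dot w0 x \<noteq> 0"
  shows "(\<Sum>w\<in>W. chi p e (dot w x)) = 0"
proof -
  obtain z :: 'a where z: "trace p e z \<noteq> 0"
    using trace_not_identically_zero[OF prime_p card_field] by blast
  obtain t where "t \<in> W" "dot t x = z"
    using exists_dot_eq[OF assms] by blast
  then show ?thesis
    using sum_eq_0_by_translation[OF W \<open>t \<in> W\<close> z]
    by (simp add: dot_add_left chi_add[OF prime_p card_field])
qed

lemma sum_chi_dot:
  fixes W :: "('n::finite \<Rightarrow> 'a) set"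
  assumes "lin_subspace W"
  shows "(\<Sum>w\<in>W. chi p e (dot w x)) = (if x \<in> euclid_dual W then of_nat (card W) else 0)"
proof (cases "x \<in> euclid_dual W")
  case True
  then show ?thesis
    by (simp add: euclid_dual_eq chi_0[OF prime_p card_field])
next
  case False
  then obtain w0 where "w0 \<in> W" "dot w0 x \<noteq> 0"
    unfolding euclid_dual_eq by blast
  with False show ?thesis
    using sum_chi_dot_eq_0[OF assms] by simp
qed

text \<open>Evaluate \<open>\<Sum>\<^sub>x \<Sum>\<^sub>w\<^sub>\<in>\<^sub>W \<chi>(w \<cdot> x)\<close> in both orders.\<close>
lemma card_mult_card_euclid_dual:
  fixes W :: "('n::finite \<Rightarrow> 'a) set"
  assumes W: "lin_subspace W"
  shows "card W * card (euclid_dual W) = CARD('a) ^ CARD('n)"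
proof -
  have "of_nat (card W * card (euclid_dual W)) = (\<Sum>x\<in>UNIV. \<Sum>w\<in>W. chi p e (dot w x))"
    by (simp add: sum_chi_dot[OF W] sum.If_cases)
  also have "\<dots> = (\<Sum>w\<in>W. \<Sum>x\<in>UNIV. chi p e (dot x w))"
    by (subst sum.swap) (simp add: dot_commute)
  also have "\<dots> = (\<Sum>w\<in>W. if w = (\<lambda>_. 0) then of_nat CARD('n \<Rightarrow> 'a) else 0)"
    by (intro sum.cong refl) (simp add: sum_chi_dot[OF lin_subspace_UNIV] euclid_dual_UNIV)
  also have "\<dots> = of_nat CARD('n \<Rightarrow> 'a)"
    using lin_subspace_zero[OF W] by simp
  finally show ?thesis
    by (simp only: of_nat_eq_iff card_fun) simp
qed

lemma euclid_dual_euclid_dual: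
  fixes W :: "('n::finite \<Rightarrow> 'a) set"
  assumes W: "lin_subspace W"
  shows "euclid_dual (euclid_dual W) = W"
proof -
  have "card W * card (euclid_dual W) = card (euclid_dual (euclid_dual W)) * card (euclid_dual W)"
    using card_mult_card_euclid_dual[OF W] card_mult_card_euclid_dual[OF lin_subspace_euclid_dual[of W]]
    by (simp add: mult.commute)
  moreover have "card (euclid_dual W) \<noteq> 0"
    using lin_subspace_zero[OF lin_subspace_euclid_dual] by (auto simp: card_eq_0_iff)
  ultimately show ?thesis
    using subset_euclid_dual_euclid_dual by (metis card_subset_eq finite mult_right_cancel)
qed

end

lemma hamming_wt_power: "0 < m \<Longrightarrow> hamming_wt (\<lambda>i. c i ^ m) = hamming_wt (c :: 'n::finite \<Rightarrow> 'a::field)"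
  unfolding hamming_wt_def by simp

lemma code_pow_weight_ge:
  assumes "0 < m" "\<forall>c\<in>C. c \<noteq> (\<lambda>_. 0) \<longrightarrow> d \<le> hamming_wt c"
  shows "\<forall>w\<in>code_pow (C :: ('n::finite \<Rightarrow> 'a::field) set) m. w \<noteq> (\<lambda>_. 0) \<longrightarrow> d \<le> hamming_wt w"
proof (intro ballI impI)
  fix w assume "w \<in> code_pow C m" "w \<noteq> (\<lambda>_. 0)"
  then obtain c where c: "c \<in> C" "w = (\<lambda>i. c i ^ m)"
    unfolding code_pow_def by blast
  with \<open>w \<noteq> (\<lambda>_. 0)\<close> \<open>0 < m\<close> have "c \<noteq> (\<lambda>_. 0)"
    by auto
  with assms(2) c show "d \<le> hamming_wt w"
    by (simp add: hamming_wt_power[OF \<open>0 < m\<close>])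
qed

context
  fixes p e s :: nat
  assumes prime_p: "prime p" and card_field: "CARD('a::{field,finite}) = p ^ e" and s_le_e: "s \<le> e"
begin

lemma frobenius_twist_inverse:
  "((x :: 'a) ^ p ^ (e - s)) ^ p ^ s = x" "((x :: 'a) ^ p ^ s) ^ p ^ (e - s) = x"
proof -
  have "p ^ (e - s) * p ^ s = p ^ e" "p ^ s * p ^ (e - s) = p ^ e"
    using s_le_e by (simp_all flip: power_add)
  then show "(x ^ p ^ (e - s)) ^ p ^ s = x" "(x ^ p ^ s) ^ p ^ (e - s) = x"
    by (simp_all only: power_p_e_eq[OF prime_p card_field] flip: power_mult)
qed

lemma lin_subspace_code_pow:
  assumes C: "lin_subspace (C :: ('n::finite \<Rightarrow> 'a) set)"
  shows "lin_subspace (code_pow C (p ^ (e - s)))"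
  unfolding lin_subspace_def code_pow_def
proof (intro conjI ballI allI)
  have "(\<lambda>_. 0 :: 'a) = (\<lambda>i. (\<lambda>_. 0 :: 'a) i ^ p ^ (e - s))"
    using prime_gt_0_nat[OF prime_p] by (simp add: power_0_left)
  then show "(\<lambda>_. 0) \<in> (\<lambda>c i. c i ^ p ^ (e - s)) ` C"
    using lin_subspace_zero[OF C] by (rule image_eqI)
next
  fix x y assume "x \<in> (\<lambda>c i. c i ^ p ^ (e - s)) ` C" "y \<in> (\<lambda>c i. c i ^ p ^ (e - s)) ` C"
  then obtain x' y' where x': "x' \<in> C" "x = (\<lambda>i. x' i ^ p ^ (e - s))"
    and y': "y' \<in> C" "y = (\<lambda>i. y' i ^ p ^ (e - s))"
    by blast
  have "(\<lambda>i. x i + y i) = (\<lambda>i. (\<lambda>i. x' i + y' i) i ^ p ^ (e - s))"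
    unfolding x'(2) y'(2) by (simp add: frobenius_add[OF prime_p card_field])
  then show "(\<lambda>i. x i + y i) \<in> (\<lambda>c i. c i ^ p ^ (e - s)) ` C"
    using lin_subspace_add[OF C x'(1) y'(1)] by (rule image_eqI)
next
  fix a x assume "x \<in> (\<lambda>c i. c i ^ p ^ (e - s)) ` C"
  then obtain y where y: "y \<in> C" "x = (\<lambda>i. y i ^ p ^ (e - s))"
    by blast
  have "(\<lambda>i. a * x i) = (\<lambda>i. (\<lambda>i. a ^ p ^ s * y i) i ^ p ^ (e - s))"
    unfolding y(2) by (simp add: power_mult_distrib frobenius_twist_inverse)
  then show "(\<lambda>i. a * x i) \<in> (\<lambda>c i. c i ^ p ^ (e - s)) ` C"
    using lin_subspace_scale[OF C y(1)] by (rule image_eqI)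
qed

lemma card_code_pow: "card (code_pow (C :: ('n::finite \<Rightarrow> 'a) set) (p ^ (e - s))) = card C"
proof -
  have "inj (\<lambda>(c :: 'n \<Rightarrow> 'a) i. c i ^ p ^ (e - s))"
  proof (rule injI)
    fix x y :: "'n \<Rightarrow> 'a"
    assume "(\<lambda>i. x i ^ p ^ (e - s)) = (\<lambda>i. y i ^ p ^ (e - s))"
    then have "(\<lambda>i. (x i ^ p ^ (e - s)) ^ p ^ s) = (\<lambda>i. (y i ^ p ^ (e - s)) ^ p ^ s)"
      by (simp add: fun_eq_iff)
    then show "x = y"
      by (simp only: frobenius_twist_inverse)
  qed
  then show ?thesis
    unfolding code_pow_def by (simp add: card_image inj_on_subset)
qed

text \<open>Raising \<open>[c, x]\<^sub>s\<close> to the power \<open>p\<^sup>e\<^sup>-\<^sup>s\<close> gives the Euclidean product of \<open>c\<^bsup>p\<^sup>e\<^sup>-\<^sup>s\<^esup>\<close> and \<open>x\<close>.\<close>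
lemma galois_dual_eq_euclid_dual_code_pow:
  "galois_dual p s (C :: ('n::finite \<Rightarrow> 'a) set) = euclid_dual (code_pow C (p ^ (e - s)))"
proof -
  have "galois_form p s c x ^ p ^ (e - s) = (\<Sum>i\<in>UNIV. c i ^ p ^ (e - s) * x i)" for c x :: "'n \<Rightarrow> 'a"
    unfolding galois_form_def frobenius_sum[OF prime_p card_field]
    by (simp add: power_mult_distrib frobenius_twist_inverse)
  then have "galois_form p s c x = 0 \<longleftrightarrow> (\<Sum>i\<in>UNIV. c i ^ p ^ (e - s) * x i) = 0" for c x :: "'n \<Rightarrow> 'a"
    by (metis prime_gt_0_nat[OF prime_p] zero_less_power power_eq_0_iff)
  then show ?thesis
    unfolding galois_dual_def euclid_dual_def code_pow_def by auto
qed

end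

definition coset :: "('n \<Rightarrow> 'a::ab_group_add) set \<Rightarrow> ('n \<Rightarrow> 'a) \<Rightarrow> ('n \<Rightarrow> 'a) set" where
  "coset S x = {y. (\<lambda>i. y i - x i) \<in> S}"

text \<open>The span of the coset states \<open>\<Sum>\<^sub>s\<^sub>\<in>\<^sub>S |x + s\<rangle>\<close>, \<open>x \<in> C\<close>.\<close>
definition coset_state_code ::
    "('n::finite \<Rightarrow> 'a::field) set \<Rightarrow> ('n \<Rightarrow> 'a) set \<Rightarrow> (('n \<Rightarrow> 'a) \<Rightarrow> complex) set" where
  "coset_state_code S C = {lcomb (indicator ` coset S ` C) c | c. True}"

context
  fixes S :: "('n::finite \<Rightarrow> 'a::field) set"
  assumes S: "lin_subspace S"
begin

lemma coset_self: "x \<in> coset S x"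
  unfolding coset_def using lin_subspace_zero[OF S] by simp

lemma coset_eq:
  assumes "y \<in> coset S x"
  shows "coset S y = coset S x"
proof -
  have yx: "(\<lambda>i. y i - x i) \<in> S"
    using assms unfolding coset_def by simp
  have "(\<lambda>i. z i - y i) \<in> S \<longleftrightarrow> (\<lambda>i. z i - x i) \<in> S" for z
    using lin_subspace_add[OF S _ yx, of "\<lambda>i. z i - y i"] lin_subspace_diff[OF S _ yx, of "\<lambda>i. z i - x i"]
    by auto
  then show ?thesis
    unfolding coset_def by blast
qed

lemma coset_eq_iff: "coset S y = coset S x \<longleftrightarrow> x \<in> coset S y"
  using coset_eq coset_self by metis

lemma coset_shift_iff:
  assumes "t \<in> S"
  shows "(\<lambda>i. y i + t i) \<in> coset S x \<longleftrightarrow> y \<in> coset S x"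
  using lin_subspace_add[OF S _ assms, of "\<lambda>i. y i - x i"] lin_subspace_diff[OF S _ assms, of "\<lambda>i. y i + t i - x i"]
  unfolding coset_def by (auto simp: algebra_simps)

lemma coset_subset:
  assumes "lin_subspace C" "S \<subseteq> C" "x \<in> C"
  shows "coset S x \<subseteq> C"
  using lin_subspace_add[OF assms(1) _ assms(3)] assms(2) unfolding coset_def by force

lemma card_coset: "card (coset S x) = card S"
proof -
  have "bij_betw (\<lambda>y i. y i - x i) (coset S x) S"
    by (rule bij_betw_byWitness[of _ "\<lambda>s i. s i + x i"]) (auto simp: coset_def)
  then show ?thesis
    by (rule bij_betw_same_card)
qed

end

text \<open>The cosets partition \<open>C\<close> into blocks of size \<open>|S|\<close>.\<close>
lemma card_mult_card_cosets:
  fixes S C :: "('n::finite \<Rightarrow> 'a::{field,finite}) set"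
  assumes S: "lin_subspace S" and "lin_subspace C" "S \<subseteq> C"
  shows "card S * card (coset S ` C) = card C"
proof -
  have "card S * card (coset S ` C) = card (\<Union>(coset S ` C))"
  proof (rule card_partition)
    fix c assume "c \<in> coset S ` C"
    then show "card c = card S"
      using card_coset[OF S] by auto
  next
    fix c1 c2 assume "c1 \<in> coset S ` C" "c2 \<in> coset S ` C" "c1 \<noteq> c2"
    then show "c1 \<inter> c2 = {}"
      using coset_eq[OF S] by blast
  qed simp_all
  also have "\<Union>(coset S ` C) = C"
    using coset_subset[OF S assms(2,3)] coset_self[OF S] by blast
  finally show ?thesis .
qed

lemma inj_indicator: "inj (indicator :: 'a set \<Rightarrow> 'a \<Rightarrow> 'b::zero_neq_one)"
  by (rule injI) (metis indicator_eq_1_iff subsetI subset_antisym)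

lemma lcomb_delta:
  assumes "finite B" "b \<in> B"
  shows "lcomb B (\<lambda>b'. if b' = b then 1 else 0) = b"
  unfolding lcomb_def using assms by (simp add: if_distrib[of "\<lambda>u. u * _"] cong: if_cong)

context
  fixes S C :: "('n::finite \<Rightarrow> 'a::{field,finite}) set"
  assumes S: "lin_subspace S" and C: "lin_subspace C" and S_sub_C: "S \<subseteq> C"
begin

lemma coset_state_code_vanishing:
  assumes "u \<in> coset_state_code S C" "y \<notin> C"
  shows "u y = 0"
proof -
  have "\<forall>x\<in>C. y \<notin> coset S x"
    using assms(2) coset_subset[OF S C S_sub_C] by blast
  then show ?thesis
    using assms(1) unfolding coset_state_code_def lcomb_def
    by (auto intro!: sum.neutral simp: indicator_def)
qed

lemma coset_state_code_periodic: "u \<in> coset_state_code S C \<Longrightarrow> t \<in> S \<Longrightarrow> u (\<lambda>i. y i + t i) = u y"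
  unfolding coset_state_code_def lcomb_def indicator_def
  by (auto intro!: sum.cong simp: coset_shift_iff[OF S])

lemma indicator_coset_mem:
  assumes "x \<in> C"
  shows "indicator (coset S x) \<in> coset_state_code S C"
proof -
  let ?B = "indicator ` coset S ` C :: (('n \<Rightarrow> 'a) \<Rightarrow> complex) set"
  have "indicator (coset S x) = lcomb ?B (\<lambda>b. if b = indicator (coset S x) then 1 else 0)"
    using assms by (simp add: lcomb_delta)
  then show ?thesis
    unfolding coset_state_code_def by blast
qed

text \<open>Distinct cosets are disjoint, so evaluating a combination of their indicators at a point of
  a coset picks out that coset's coefficient.\<close>
lemma has_dim_coset_state_code: "has_dim (coset_state_code S C) (card (coset S ` C))"
  unfolding has_dim_def
proof (intro exI conjI allI impI ballI)
  let ?B = "indicator ` coset S ` C :: (('n \<Rightarrow> 'a) \<Rightarrow> complex) set"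
  show "card ?B = card (coset S ` C)"
    by (simp add: card_image inj_on_subset[OF inj_indicator])
  show "?B \<subseteq> coset_state_code S C"
    using indicator_coset_mem by blast
  show "coset_state_code S C = {lcomb ?B c | c. True}"
    unfolding coset_state_code_def ..
  fix c b
  assume zero: "lcomb ?B c = (\<lambda>_. 0)" and "b \<in> ?B"
  then obtain x where x: "x \<in> C" "b = indicator (coset S x)"
    by blast
  have delta: "b' x = (if b' = b then 1 else 0)" if "b' \<in> ?B" for b'
  proof -
    obtain y where y: "b' = indicator (coset S y)"
      using \<open>b' \<in> ?B\<close> by blast
    have "b' = b \<longleftrightarrow> x \<in> coset S y"
      unfolding x(2) y inj_eq[OF inj_indicator] coset_eq_iff[OF S] ..
    then show ?thesis
      by (simp add: y)
  qed
  have "lcomb ?B c x = (\<Sum>b'\<in>?B. if b' = b then c b' else 0)"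
    unfolding lcomb_def by (rule sum.cong) (simp_all add: delta)
  also have "\<dots> = c b"
    using \<open>b \<in> ?B\<close> by simp
  finally have "lcomb ?B c x = c b" .
  then show "c b = 0"
    using zero by (metis fun_cong)
qed simp

text \<open>The coset states of \<open>0\<close> and of \<open>x\<close> have disjoint supports, so they are not proportional.\<close>
lemma coset_state_code_not_has_dim_1:
  assumes "x \<in> C" "x \<notin> S"
  shows "\<not> has_dim (coset_state_code S C) 1"
proof
  assume dim_1: "has_dim (coset_state_code S C) 1"
  have "(\<lambda>_. 0) \<notin> coset S x"
    using lin_subspace_scale[OF S, of _ "-1"] assms(2) unfolding coset_def by fastforce
  then have "indicator (coset S x) (\<lambda>_. 0) = (0 :: complex)"
    by simp
  moreover have "indicator (coset S (\<lambda>_. 0)) (\<lambda>_. 0) \<noteq> (0 :: complex)"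
    using coset_self[OF S] by simp
  ultimately have "indicator (coset S x) = (\<lambda>_. 0 :: complex)"
    using has_dim_1_vanishing[OF dim_1 indicator_coset_mem[OF lin_subspace_zero[OF C]]
        indicator_coset_mem[OF assms(1)]]
    by blast
  then show False
    using coset_self[OF S, of x] by (metis indicator_simps(1) zero_neq_one)
qed

end

lemma hamming_wt_le_err_wt:
  "hamming_wt a \<le> err_wt a (b :: 'n::finite \<Rightarrow> 'a::zero)"
  "hamming_wt b \<le> err_wt (a :: 'n::finite \<Rightarrow> 'a::zero) b"
  unfolding hamming_wt_def err_wt_def by (auto intro: card_mono)

lemma err_wt_zero_left: "err_wt (\<lambda>_. 0) b = hamming_wt (b :: 'n::finite \<Rightarrow> 'a::zero)"
  unfolding hamming_wt_def err_wt_def by simp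

context
  fixes p e :: nat
  assumes prime_p: "prime p" and card_field: "CARD('a::{field,finite}) = p ^ e"
begin

lemma qinner_err_apply:
  fixes u v :: "('n::finite \<Rightarrow> 'a) \<Rightarrow> complex"
  shows "qinner u (err_apply p e c a b v) = exp (2 * of_real pi * \<i> * of_nat c / of_nat p) *
     (\<Sum>x\<in>UNIV. cnj (u (\<lambda>i. x i + a i)) * chi p e (dot b x) * v x)"
proof -
  have "(\<Prod>i\<in>UNIV. chi p e (b i * (y i - a i))) = chi p e (dot b (\<lambda>i. y i - a i))" for y
    unfolding dot_def by (rule chi_sum[OF prime_p card_field, symmetric])
  then have "qinner u (err_apply p e c a b v) =
     (\<Sum>y\<in>UNIV. cnj (u y) * (exp (2 * of_real pi * \<i> * of_nat c / of_nat p) *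
        chi p e (dot b (\<lambda>i. y i - a i)) * v (\<lambda>i. y i - a i)))"
    unfolding qinner_def err_apply_def by simp
  also have "\<dots> = (\<Sum>x\<in>UNIV. cnj (u (\<lambda>i. x i + a i)) * (exp (2 * of_real pi * \<i> * of_nat c / of_nat p) *
        chi p e (dot b x) * v x))"
    by (rule sum.reindex_bij_witness[of _ "\<lambda>y i. y i + a i" "\<lambda>x i. x i - a i"]) auto
  finally show ?thesis
    by (simp add: sum_distrib_left mult_ac)
qed

context
  fixes S C :: "('n::finite \<Rightarrow> 'a) set"
  assumes S: "lin_subspace S" and C: "lin_subspace C" and S_sub_C: "S \<subseteq> C"
begin

lemma coset_state_code_err_eq_0:
  assumes u: "u \<in> coset_state_code S C" and v: "v \<in> coset_state_code S C"
    and "a \<notin> C \<or> b \<notin> euclid_dual S"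
  shows "qinner u (err_apply p e c a b v) = 0"
proof -
  let ?f = "\<lambda>x. cnj (u (\<lambda>i. x i + a i)) * chi p e (dot b x) * v x"
  have "(\<Sum>x\<in>UNIV. ?f x) = 0"
  proof (cases "a \<in> C")
    case False
    have zero: "?f x = 0" for x
    proof (cases "x \<in> C")
      case True
      then have "(\<lambda>i. x i + a i) \<notin> C"
        using lin_subspace_diff[OF C _ True, of "\<lambda>i. x i + a i"] False by auto
      then show ?thesis
        using coset_state_code_vanishing[OF S C S_sub_C u] by simp
    qed (simp add: coset_state_code_vanishing[OF S C S_sub_C v])
    then show ?thesis
      by (intro sum.neutral) blast
  next
    case True
    then obtain s0 where "s0 \<in> S" "dot s0 b \<noteq> 0"
      using assms(3) unfolding euclid_dual_eq by blast
    moreover obtain z :: 'a where z: "trace p e z \<noteq> 0"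
      using trace_not_identically_zero[OF prime_p card_field] by blast
    ultimately obtain t where "t \<in> S" "dot t b = z"
      using exists_dot_eq[OF S] by blast
    text \<open>Both states are \<open>S\<close>-periodic, so translating by \<open>t\<close> only changes the character value.\<close>
    have "?f (\<lambda>i. x i + t i) = chi p e z * ?f x" for x
      using coset_state_code_periodic[OF S C S_sub_C u \<open>t \<in> S\<close>, of "\<lambda>i. x i + a i"]
        coset_state_code_periodic[OF S C S_sub_C v \<open>t \<in> S\<close>, of x] \<open>dot t b = z\<close>
      by (simp add: dot_add_right dot_commute[of t] chi_add[OF prime_p card_field] add_ac mult_ac)
    then show ?thesis
      using sum_eq_0_by_translation[OF prime_p card_field lin_subspace_UNIV UNIV_I z, where f = ?f] by blast
  qed
  then show ?thesis
    by (simp add: qinner_err_apply)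
qed

lemma coset_state_code_err_eq_qinner:
  assumes u: "u \<in> coset_state_code S C" and v: "v \<in> coset_state_code S C"
    and "a \<in> S" "b \<in> euclid_dual C"
  shows "qinner u (err_apply p e c a b v) = exp (2 * of_real pi * \<i> * of_nat c / of_nat p) * qinner u v"
proof -
  have term_eq: "cnj (u (\<lambda>i. x i + a i)) * chi p e (dot b x) * v x = cnj (u x) * v x" for x
  proof (cases "x \<in> C")
    case True
    then have "dot x b = 0"
      using assms(4) unfolding euclid_dual_eq by blast
    then have "dot b x = 0"
      by (simp add: dot_commute)
    then show ?thesis
      using coset_state_code_periodic[OF S C S_sub_C u \<open>a \<in> S\<close>] by (simp add: chi_0[OF prime_p card_field])
  qed (simp add: coset_state_code_vanishing[OF S C S_sub_C v])
  then show ?thesis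
    by (simp only: qinner_err_apply term_eq) (simp add: qinner_def)
qed

end

end

lemma power_mult_eq_power_imp_eq:
  assumes "1 < (q::nat)" "q ^ n * k = q ^ m"
  shows "k = q ^ (m - n)"
proof -
  have "q ^ m \<noteq> 0"
    using assms(1) by simp
  then have "k \<noteq> 0"
    using assms(2) by (metis mult_0_right)
  then have "q ^ n * 1 \<le> q ^ m"
    unfolding assms(2)[symmetric] by (intro mult_le_mono2) simp
  then have "q ^ n \<le> q ^ m"
    by simp
  then have "n \<le> m"
    by (rule power_le_imp_le_exp[OF assms(1)])
  then have "q ^ m = q ^ n * q ^ (m - n)"
    by (simp flip: power_add)
  then show ?thesis
    using assms by simp
qed

context
  fixes p e :: nat and C D :: "('n::finite \<Rightarrow> 'a::{field,finite}) set"
  assumes prime_p: "prime p" and card_field: "CARD('a) = p ^ e"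
    and C: "lin_subspace C" and D: "lin_subspace D" and dual_D_sub_C: "euclid_dual D \<subseteq> C"
begin

lemma has_dim_coset_state_code_dual:
  assumes "card C = CARD('a) ^ k1" "card D = CARD('a) ^ k2"
  shows "has_dim (coset_state_code (euclid_dual D) C) (CARD('a) ^ (k1 + k2 - CARD('n)))"
proof -
  let ?S = "euclid_dual D"
  have "CARD('a) ^ CARD('n) * card (coset ?S ` C) = card D * (card ?S * card (coset ?S ` C))"
    using card_mult_card_euclid_dual[OF prime_p card_field D] by simp
  also have "\<dots> = CARD('a) ^ (k1 + k2)"
    using card_mult_card_cosets[OF lin_subspace_euclid_dual C dual_D_sub_C] assms
    by (simp add: power_add)
  finally have "card (coset ?S ` C) = CARD('a) ^ (k1 + k2 - CARD('n))"
    using card_field_gt_1 power_mult_eq_power_imp_eq by blast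
  then show ?thesis
    using has_dim_coset_state_code[OF lin_subspace_euclid_dual C dual_D_sub_C] by simp
qed

lemma exists_mem_diff_euclid_dual:
  assumes "(C - euclid_dual D) \<union> (D - euclid_dual C) \<noteq> {}"
  shows "\<exists>x\<in>C. x \<notin> euclid_dual D"
proof -
  obtain w where "w \<in> C - euclid_dual D \<or> w \<in> D - euclid_dual C"
    using assms by blast
  then show ?thesis
  proof
    assume "w \<in> D - euclid_dual C"
    then obtain c where "c \<in> C" "dot c w \<noteq> 0"
      unfolding euclid_dual_eq by blast
    with \<open>w \<in> D - euclid_dual C\<close> show ?thesis
      unfolding euclid_dual_eq by (auto simp: dot_commute)
  qed blast
qed

lemma coset_state_code_qmin_dist:
  defines "U \<equiv> (C - euclid_dual D) \<union> (D - euclid_dual C)"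
  assumes "U \<noteq> {}"
  shows "qmin_dist p e (coset_state_code (euclid_dual D) C) (Min (hamming_wt ` U))"
proof -
  let ?S = "euclid_dual D" and ?Q = "coset_state_code (euclid_dual D) C"
  have S: "lin_subspace ?S"
    by (rule lin_subspace_euclid_dual)
  have dual_S: "euclid_dual ?S = D"
    by (rule euclid_dual_euclid_dual[OF prime_p card_field D])
  have "qinner u (err_apply p e c a b v) = 0"
    if "u \<in> ?Q" "v \<in> ?Q" "qinner u v = 0" "err_wt a b < Min (hamming_wt ` U)" for u v c a b
  proof (cases "a \<in> C \<and> b \<in> D")
    case True
    have "Min (hamming_wt ` U) \<le> hamming_wt w" if "w \<in> U" for w
      using that by simp
    then have "a \<notin> U" "b \<notin> U"
      using that(4) hamming_wt_le_err_wt[of a b] hamming_wt_le_err_wt[of b a] by (metis le_trans not_le)+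
    then have "a \<in> ?S" "b \<in> euclid_dual C"
      using True unfolding U_def by auto
    then show ?thesis
      using coset_state_code_err_eq_qinner[OF prime_p card_field S C dual_D_sub_C] that(1-3) by simp
  next
    case False
    then show ?thesis
      using coset_state_code_err_eq_0[OF prime_p card_field S C dual_D_sub_C] that(1,2) dual_S by blast
  qed
  moreover obtain x where "x \<in> C" "x \<notin> ?S"
    using exists_mem_diff_euclid_dual assms(2) unfolding U_def by blast
  then have "\<not> has_dim ?Q 1"
    by (rule coset_state_code_not_has_dim_1[OF S C dual_D_sub_C])
  ultimately show ?thesis
    unfolding qmin_dist_def by blast
qed

lemma coset_state_code_pure_to:
  assumes weight: "\<forall>w\<in>C \<union> D. w \<noteq> (\<lambda>_. 0) \<longrightarrow> t \<le> hamming_wt w"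
  shows "pure_to p e (coset_state_code (euclid_dual D) C) t"
  unfolding pure_to_def
proof (intro ballI allI impI)
  fix u v c and a b :: "'n \<Rightarrow> 'a"
  assume uv: "u \<in> coset_state_code (euclid_dual D) C" "v \<in> coset_state_code (euclid_dual D) C"
    and "1 \<le> err_wt a b" "err_wt a b < t"
  have "\<not> (a \<in> C \<and> b \<in> D)"
  proof
    assume "a \<in> C \<and> b \<in> D"
    then have "a = (\<lambda>_. 0)"
      using weight hamming_wt_le_err_wt(1)[of a b] \<open>err_wt a b < t\<close> by fastforce
    then have "b \<noteq> (\<lambda>_. 0)"
      using \<open>1 \<le> err_wt a b\<close> by (auto simp: err_wt_zero_left hamming_wt_def)
    then show False
      using weight \<open>a \<in> C \<and> b \<in> D\<close> hamming_wt_le_err_wt(2)[of b a] \<open>err_wt a b < t\<close> by fastforce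
  qed
  then show "qinner u (err_apply p e c a b v) = 0"
    using coset_state_code_err_eq_0[OF prime_p card_field lin_subspace_euclid_dual C dual_D_sub_C] uv
      euclid_dual_euclid_dual[OF prime_p card_field D] by blast
qed

end

theorem corollary2p3:
  fixes C1 C2 :: "('n::finite \<Rightarrow> 'a::{field,finite}) set"
    and p e s k1 k2 d1 d2 :: nat
  assumes "prime p" and "card (UNIV :: 'a set) = p ^ e" and "1 \<le> e" and "s < e"
    and "lin_code C1 k1 d1" and "lin_code C2 k2 d2"
    and "galois_dual p s C2 \<subseteq> C1"
    and "(C1 - euclid_dual (code_pow C2 (p ^ (e - s)))) \<union>
         (code_pow C2 (p ^ (e - s)) - euclid_dual C1) \<noteq> {}"
  shows "\<exists>Q :: (('n \<Rightarrow> 'a) \<Rightarrow> complex) set. quantum_code p e Q (k1 + k2 - card (UNIV :: 'n set))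
              (Min (hamming_wt ` ((C1 - euclid_dual (code_pow C2 (p ^ (e - s)))) \<union>
                                   (code_pow C2 (p ^ (e - s)) - euclid_dual C1))))
           \<and> Min (hamming_wt ` ((C1 - euclid_dual (code_pow C2 (p ^ (e - s)))) \<union>
                                   (code_pow C2 (p ^ (e - s)) - euclid_dual C1))) \<ge> min d1 d2
           \<and> pure_to p e Q (min d1 d2)"
proof -
  define D where "D = code_pow C2 (p ^ (e - s))"
  have C1: "has_dim C1 k1" "\<forall>c\<in>C1. c \<noteq> (\<lambda>_. 0) \<longrightarrow> d1 \<le> hamming_wt c"
    and C2: "has_dim C2 k2" "\<forall>c\<in>C2. c \<noteq> (\<lambda>_. 0) \<longrightarrow> d2 \<le> hamming_wt c"
    using assms(5,6) unfolding lin_code_def by auto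
  have s_le_e: "s \<le> e"
    using assms(4) by simp
  have D: "lin_subspace D" "card D = CARD('a) ^ k2" "euclid_dual D \<subseteq> C1"
    using lin_subspace_code_pow[OF assms(1,2) s_le_e has_dim_lin_subspace[OF C2(1)]]
      card_code_pow[OF assms(1,2) s_le_e, of C2] card_has_dim[OF C2(1)] assms(7)
      galois_dual_eq_euclid_dual_code_pow[OF assms(1,2) s_le_e, of C2]
    unfolding D_def by simp_all
  note C1_D = assms(1,2) has_dim_lin_subspace[OF C1(1)] D(1,3)
  have weight: "\<forall>w\<in>C1 \<union> D. w \<noteq> (\<lambda>_. 0) \<longrightarrow> min d1 d2 \<le> hamming_wt w"
    using C1(2) code_pow_weight_ge[OF _ C2(2), of "p ^ (e - s)"] prime_gt_0_nat[OF assms(1)]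
    unfolding D_def by force
  text \<open>Every word of \<open>U\<close> is nonzero, since both duals contain the zero word.\<close>
  have "\<forall>w\<in>(C1 - euclid_dual D) \<union> (D - euclid_dual C1). min d1 d2 \<le> hamming_wt w"
    using weight lin_subspace_zero[OF lin_subspace_euclid_dual, of D]
      lin_subspace_zero[OF lin_subspace_euclid_dual, of C1] by (metis DiffE UnCI UnE)
  then have "min d1 d2 \<le> Min (hamming_wt ` ((C1 - euclid_dual D) \<union> (D - euclid_dual C1)))"
    using assms(8) unfolding D_def[symmetric] by (simp add: Min_ge_iff)
  then show ?thesis
    using has_dim_coset_state_code_dual[OF C1_D card_has_dim[OF C1(1)] D(2)]
      coset_state_code_qmin_dist[OF C1_D assms(8)[folded D_def]]
      coset_state_code_pure_to[OF C1_D weight]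
    unfolding quantum_code_def D_def by blast
qed

end
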